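(* 1. $K_0=\mathbb X$. 2. $K_{\nu_2}\subset K_{\nu_1}$ whenever $0\le\nu_1\le\nu_2$. 3. For every $\nu>1$, $K_\nu=\operatorname{argmin}_{z\in\mathbb X}\mathcal R(z)+\ker(A)$. 4. $\mathrm{dom}(\mathcal R)+\ker(A)\subset K_{1/2}$.
   Context: Standing setting: $\mathbb X$ real Banach space, $\tau$ a topology with $(\mathbb X,\tau)$ locally convex Hausdorff; $\mathcal R:\mathbb X\to(-\infty,\infty]$ proper convex with $\tau$-compact sublevel sets $\{\mathcal R\le\lambda\}$, $\lambda\in\mathbb R$; $\mathbb Y$ real Hilbert space; $A:\mathbb X\to\mathbb Y$ linear, $\tau$-to-weak continuous. $T_\alpha(x,g):=\frac1{2\alpha}\|g-Ax\|_{\mathbb Y}^2+\mathcal R(x)$, $R_\alpha(g):=\operatorname{argmin}_{x\in\mathrm{dom}(\mathcal R)}T_\alpha(x,g)$. For $\nu\ge0$, $\varrho_\nu(x):=\sup\{\alpha^{-\nu}\|Ax-Ax_\alpha\|_{\mathbb Y}:\alpha>0,x_\alpha\in R_\alpha(Ax)\}\in[0,\infty]$ and $K_\nu:=\{x\in\mathbb X:\varrho_\nu(x)<\infty\}$. *)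

theory Defs
  imports "HOL-Analysis.Analysis"
begin

definition locally_convex_Hausdorff :: "'a::real_vector topology \<Rightarrow> bool" where
  "locally_convex_Hausdorff tau \<longleftrightarrow>
     topspace tau = UNIV \<and> Hausdorff_space tau \<and>
     continuous_map (prod_topology tau tau) tau (\<lambda>(x, y). x + y) \<and>
     continuous_map (prod_topology euclideanreal tau) tau (\<lambda>(c, x). c *\<^sub>R x) \<and>
     (\<forall>U x. openin tau U \<and> x \<in> U \<longrightarrow> (\<exists>V. openin tau V \<and> convex V \<and> x \<in> V \<and> V \<subseteq> U))"

definition weak_topology :: "'b::real_inner topology" where
  "weak_topology = topology_generated_by {{y. z \<bullet> y \<in> U} | z U. open U}"

definition edom :: "('a \<Rightarrow> ereal) \<Rightarrow> 'a set" where
  "edom R = {x. R x < \<infinity>}"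

definition proper_convex :: "('a::real_vector \<Rightarrow> ereal) \<Rightarrow> bool" where
  "proper_convex R \<longleftrightarrow> (\<forall>x. R x \<noteq> -\<infinity>) \<and> (\<exists>x. R x \<noteq> \<infinity>) \<and>
     (\<forall>x y t. 0 \<le> t \<and> t \<le> 1 \<longrightarrow>
        R ((1 - t) *\<^sub>R x + t *\<^sub>R y) \<le> ereal (1 - t) * R x + ereal t * R y)"

definition Tik :: "('a \<Rightarrow> 'b::real_normed_vector) \<Rightarrow> ('a \<Rightarrow> ereal) \<Rightarrow> real \<Rightarrow> 'a \<Rightarrow> 'b \<Rightarrow> ereal" where
  "Tik A R \<alpha> x g = ereal (1 / (2 * \<alpha>) * (norm (g - A x))\<^sup>2) + R x"

definition Ralpha :: "('a \<Rightarrow> 'b::real_normed_vector) \<Rightarrow> ('a \<Rightarrow> ereal) \<Rightarrow> real \<Rightarrow> 'b \<Rightarrow> 'a set" where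
  "Ralpha A R \<alpha> g = {x \<in> edom R. \<forall>z \<in> edom R. Tik A R \<alpha> x g \<le> Tik A R \<alpha> z g}"

definition rho :: "('a \<Rightarrow> 'b::real_normed_vector) \<Rightarrow> ('a \<Rightarrow> ereal) \<Rightarrow> real \<Rightarrow> 'a \<Rightarrow> ennreal" where
  "rho A R \<nu> x = Sup {ennreal (\<alpha> powr (-\<nu>) * norm (A x - A xa)) | \<alpha> xa. \<alpha> > 0 \<and> xa \<in> Ralpha A R \<alpha> (A x)}"

definition Kset :: "('a \<Rightarrow> 'b::real_normed_vector) \<Rightarrow> ('a \<Rightarrow> ereal) \<Rightarrow> real \<Rightarrow> 'a set" where
  "Kset A R \<nu> = {x. rho A R \<nu> x < \<infinity>}"

definition argminR :: "('a \<Rightarrow> ereal) \<Rightarrow> 'a set" where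
  "argminR R = {z. \<forall>w. R z \<le> R w}"

definition kerA :: "('a \<Rightarrow> 'b::zero) \<Rightarrow> 'a set" where
  "kerA A = {k. A k = 0}"

end

theory Submission
  imports Defs
begin

text \<open>Comparing a Tikhonov minimiser \<open>x\<^sub>\<alpha>\<close> of \<open>T\<^sub>\<alpha>(\<cdot>, A x)\<close> with an arbitrary
\<open>z \<in> dom R\<close> and using that a minimiser \<open>m\<close> of \<open>R\<close> satisfies \<open>R m \<le> R x\<^sub>\<alpha>\<close> gives
\<open>\<parallel>A x - A x\<^sub>\<alpha>\<parallel>\<^sup>2 \<le> \<parallel>A x - A z\<parallel>\<^sup>2 + 2\<alpha> (R z - R m)\<close>.
With \<open>z = m\<close> the residual is bounded uniformly in \<open>\<alpha>\<close>, which gives \<open>K\<^sub>0 = X\<close> and, since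
\<open>\<alpha>\<^sup>-\<^sup>\<nu>\<close> decreases in \<open>\<nu>\<close> for \<open>\<alpha> \<le> 1\<close>, the monotonicity of \<open>K\<^sub>\<nu>\<close>; with \<open>z = x - k\<close>,
\<open>k \<in> ker A\<close>, it gives the rate \<open>\<alpha>\<^sup>1\<^sup>/\<^sup>2\<close> on \<open>dom R + ker A\<close> and the residual \<open>0\<close> on
\<open>argmin R + ker A\<close>.
Conversely, if the residual decays like \<open>\<alpha>\<^sup>\<nu>\<close> with \<open>\<nu> > 1\<close>, comparing \<open>x\<^sub>\<alpha>\<close> with the
convex combinations \<open>(1 - t) x\<^sub>\<alpha> + t z\<close> yields \<open>R x\<^sub>\<alpha> \<le> R z + O(\<alpha>\<^sup>\<nu>\<^sup>-\<^sup>1)\<close>. The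
minimisers for \<open>\<alpha> = 1/(n+1)\<close> lie in a compact sublevel set of \<open>R\<close>; by lower semicontinuity
of \<open>R\<close> and weak lower semicontinuity of the norm, any cluster point is a minimiser of \<open>R\<close>
with the same image as \<open>x\<close>.\<close>

lemma compactin_sequence_cluster_point:
  assumes "compactin X K" and "\<And>n. y n \<in> K"
  shows "\<exists>m\<in>K. \<forall>U. openin X U \<and> m \<in> U \<longrightarrow> (\<exists>\<^sub>F n in sequentially. y n \<in> U)"
proof -
  define \<U> where "\<U> = range (\<lambda>N. X closure_of (y ` {N..}))"
  have tails: "y ` {N..} \<subseteq> topspace X" for N
    using assms compactin_subset_topspace by blast
  have "K \<inter> \<Inter>\<F> \<noteq> {}" if fin: "finite \<F>" and sub: "\<F> \<subseteq> \<U>" for \<F>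
  proof -
    obtain I where I: "finite I" "\<F> = (\<lambda>N. X closure_of (y ` {N..})) ` I"
      using finite_subset_image[OF fin sub[unfolded \<U>_def]] by blast
    have "y (Max (insert 0 I)) \<in> X closure_of (y ` {N..})" if "N \<in> I" for N
      using closure_of_subset[OF tails] that I(1) by fastforce
    then show ?thesis using assms(2) I(2) by blast
  qed
  moreover have "\<forall>C\<in>\<U>. closedin X C" by (simp add: \<U>_def)
  ultimately have "K \<inter> \<Inter>\<U> \<noteq> {}"
    using compactin_fip[THEN iffD1, OF assms(1)] by blast
  then obtain m where m: "m \<in> K" "\<And>N. m \<in> X closure_of (y ` {N..})"
    unfolding \<U>_def by blast
  have "\<exists>\<^sub>F n in sequentially. y n \<in> U" if "openin X U" "m \<in> U" for U
    unfolding frequently_sequentially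
  proof
    fix N
    have "\<exists>n\<in>{N..}. y n \<in> U" using m(2)[of N] that unfolding in_closure_of by blast
    then show "\<exists>n\<ge>N. y n \<in> U" by auto
  qed
  then show ?thesis using m(1) by blast
qed

lemma cluster_point_upper_level_le:
  assumes "openin X {x. c < f x}"
    and "\<forall>U. openin X U \<and> m \<in> U \<longrightarrow> (\<exists>\<^sub>F n in sequentially. y n \<in> U)"
    and "\<forall>\<^sub>F n in sequentially. f (y n) \<le> (c :: 'b :: linorder)"
  shows "f m \<le> c"
proof (rule ccontr)
  assume "\<not> f m \<le> c"
  then have "\<exists>\<^sub>F n in sequentially. c < f (y n)" using assms(1,2) by auto
  moreover have "\<forall>\<^sub>F n in sequentially. \<not> c < f (y n)"
    using assms(3) by (rule eventually_mono) (simp add: not_less)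
  ultimately show False unfolding frequently_def by blast
qed

lemma compact_sublevel_attains_min:
  fixes f :: "'a \<Rightarrow> 'b :: linorder"
  assumes "compactin X {x. f x \<le> f x0}" and "\<And>y. closedin X {x. f x \<le> f y}"
  shows "\<exists>m. \<forall>x. f m \<le> f x"
proof -
  define \<U> where "\<U> = (\<lambda>y. {x. f x \<le> f y}) ` {y. f y \<le> f x0}"
  have "{x. f x \<le> f x0} \<inter> \<Inter>\<F> \<noteq> {}" if fin: "finite \<F>" and sub: "\<F> \<subseteq> \<U>" for \<F>
  proof -
    obtain I where I: "finite I" "\<F> = (\<lambda>y. {x. f x \<le> f y}) ` I"
      using finite_subset_image[OF fin sub[unfolded \<U>_def]] by blast
    have "Min (f ` insert x0 I) \<in> f ` insert x0 I" using I(1) by (intro Min_in) auto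
    then obtain y where y: "f y = Min (f ` insert x0 I)" by auto
    have "f y \<le> f z" if "z \<in> insert x0 I" for z
      unfolding y using I(1) that by (intro Min_le) auto
    then have "y \<in> {x. f x \<le> f x0} \<inter> \<Inter>\<F>" unfolding I(2) by blast
    then show ?thesis by blast
  qed
  moreover have "\<forall>C\<in>\<U>. closedin X C" using assms(2) by (simp add: \<U>_def)
  ultimately have "{x. f x \<le> f x0} \<inter> \<Inter>\<U> \<noteq> {}"
    using compactin_fip[THEN iffD1, OF assms(1)] by blast
  then obtain m where m: "f m \<le> f x0" "\<And>y. f y \<le> f x0 \<Longrightarrow> f m \<le> f y"
    unfolding \<U>_def by blast
  have "f m \<le> f x" for x
  proof (cases "f x \<le> f x0")
    case False
    then show ?thesis using order.trans[OF m(1)] by simp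
  qed (rule m(2))
  then show ?thesis by blast
qed

lemma openin_upper_level_add:
  fixes f :: "'a \<Rightarrow> real" and g :: "'a \<Rightarrow> ereal"
  assumes f: "\<And>c. openin X {x. c < f x}" and g: "\<And>c. openin X {x. c < g x}"
  shows "openin X {x. c < ereal (f x) + g x}"
proof (subst openin_subopen, intro ballI)
  fix x assume "x \<in> {x. c < ereal (f x) + g x}"
  then have x: "c < ereal (f x) + g x" by simp
  obtain a b where ab: "a < f x" "b < g x" "c \<le> ereal a + b"
  proof (cases c)
    case (real r)
    show ?thesis
    proof (cases "g x")
      case (real s)
      define \<delta> where "\<delta> = (f x + s - r) / 2"
      show ?thesis using x \<open>c = ereal r\<close> real
        by (intro that[of "f x - \<delta>" "ereal (s - \<delta>)"]) (auto simp: \<delta>_def)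
    qed (use x real that[of "f x - 1" "ereal (r - f x + 1)"] in auto)
  qed (use x that[of "f x - 1" "-\<infinity>"] in auto)
  let ?U = "{y. a < f y} \<inter> {y. b < g y}"
  have "openin X ?U" using f g by (rule openin_Int)
  moreover have "?U \<subseteq> {x. c < ereal (f x) + g x}"
  proof
    fix y assume "y \<in> ?U"
    then have "ereal a + b < ereal (f y) + g y" by (intro ereal_add_strict_mono2) auto
    then show "y \<in> {x. c < ereal (f x) + g x}" using order.strict_trans1[OF ab(3)] by simp
  qed
  ultimately show "\<exists>U. openin X U \<and> x \<in> U \<and> U \<subseteq> {x. c < ereal (f x) + g x}"
    using ab by blast
qed

lemma openin_upper_level_scaled_square:
  fixes h :: "'a \<Rightarrow> real"
  assumes h: "\<And>r. openin X {x. r < h x}" and nonneg: "\<And>x. 0 \<le> h x" and "0 < k"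
  shows "openin X {x. c < k * (h x)\<^sup>2}"
proof -
  have "{x. c < k * (h x)\<^sup>2} = {x. (if c < 0 then -1 else sqrt (c / k)) < h x}"
  proof (intro Collect_cong)
    fix x
    have "c < k * (h x)\<^sup>2 \<longleftrightarrow> c / k < (h x)\<^sup>2"
      using \<open>0 < k\<close> by (simp add: pos_divide_less_eq mult.commute)
    also have "\<dots> \<longleftrightarrow> sqrt (c / k) < h x"
      using nonneg[of x] by (metis real_sqrt_abs real_sqrt_less_iff abs_of_nonneg)
    finally have "c < k * (h x)\<^sup>2 \<longleftrightarrow> sqrt (c / k) < h x" .
    then show "c < k * (h x)\<^sup>2 \<longleftrightarrow> (if c < 0 then -1 else sqrt (c / k)) < h x"
      using nonneg[of x] \<open>0 < k\<close> by (auto intro: less_le_trans[of c 0])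
  qed
  then show ?thesis using h by simp
qed

lemma openin_weak_topology_norm_gt:
  fixes y0 :: "'b::real_inner"
  shows "openin weak_topology {y. r < norm (y0 - y)}"
proof (cases "r < 0")
  case True
  have "r < norm (y0 - y)" for y :: 'b
    using True norm_ge_zero[of "y0 - y"] by linarith
  then have "{y. r < norm (y0 - y)} = {y. 0 \<bullet> y \<in> UNIV}"
    by simp
  also have "openin weak_topology \<dots>"
    unfolding weak_topology_def by (rule topology_generated_by_Basis) (use open_UNIV in blast)
  finally show ?thesis .
next
  case False
  show ?thesis
  proof (subst openin_subopen, intro ballI)
    fix w assume w: "w \<in> {y. r < norm (y0 - y)}"
    \<comment> \<open>an open half-space of the weak topology containing \<open>w\<close> and missing the ball \<open>cball y0 r\<close>\<close>
    define z where "z = w - y0"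
    define T where "T = {y. z \<bullet> y \<in> {z \<bullet> y0 + r * norm z <..}}"
    have "openin weak_topology T"
      unfolding weak_topology_def T_def
      by (rule topology_generated_by_Basis) (use open_greaterThan in blast)
    moreover have "w \<in> T"
    proof -
      have "r * norm z < norm z * norm z"
        using w False by (intro mult_strict_right_mono) (auto simp: z_def norm_minus_commute)
      moreover have "z \<bullet> w - z \<bullet> y0 = norm z * norm z"
        by (metis z_def inner_diff_right power2_norm_eq_inner power2_eq_square)
      ultimately show ?thesis unfolding T_def by simp
    qed
    moreover have "T \<subseteq> {y. r < norm (y0 - y)}"
    proof
      fix v assume "v \<in> T"
      then have "r * norm z < z \<bullet> (v - y0)" by (simp add: T_def inner_diff_right)
      also have "\<dots> \<le> norm z * norm (v - y0)" by (rule norm_cauchy_schwarz)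
      finally have "r * norm z < norm (v - y0) * norm z" by (simp add: mult.commute)
      then have "r < norm (v - y0)" by (rule mult_right_less_imp_less) simp
      then show "v \<in> {y. r < norm (y0 - y)}" by (simp add: norm_minus_commute)
    qed
    ultimately show "\<exists>T. openin weak_topology T \<and> w \<in> T \<and> T \<subseteq> {y. r < norm (y0 - y)}"
      by blast
  qed
qed

lemma powr_minus_mult_le_iff:
  fixes \<alpha> :: real
  assumes "0 < \<alpha>"
  shows "\<alpha> powr - \<nu> * n \<le> C \<longleftrightarrow> n \<le> C * \<alpha> powr \<nu>"
  using assms by (simp add: powr_minus field_simps)

lemma LIMSEQ_inverse_Suc_powr:
  assumes "0 < p"
  shows "(\<lambda>n. inverse (real (Suc n)) powr p) \<longlonglongrightarrow> 0"
  using tendsto_zero_powrI[OF LIMSEQ_inverse_real_of_nat tendsto_const _ assms] by simp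

lemma Kset_iff_bounded:
  "x \<in> Kset A R \<nu> \<longleftrightarrow>
     (\<exists>C. \<forall>\<alpha> x\<^sub>\<alpha>. 0 < \<alpha> \<longrightarrow> x\<^sub>\<alpha> \<in> Ralpha A R \<alpha> (A x) \<longrightarrow> \<alpha> powr - \<nu> * norm (A x - A x\<^sub>\<alpha>) \<le> C)"
proof
  assume "x \<in> Kset A R \<nu>"
  then have finite: "rho A R \<nu> x < top" by (simp add: Kset_def)
  show "\<exists>C. \<forall>\<alpha> x\<^sub>\<alpha>. 0 < \<alpha> \<longrightarrow> x\<^sub>\<alpha> \<in> Ralpha A R \<alpha> (A x) \<longrightarrow> \<alpha> powr - \<nu> * norm (A x - A x\<^sub>\<alpha>) \<le> C"
  proof (intro exI allI impI)
    fix \<alpha> x\<^sub>\<alpha> assume "0 < \<alpha>" "x\<^sub>\<alpha> \<in> Ralpha A R \<alpha> (A x)"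
    then have "ennreal (\<alpha> powr - \<nu> * norm (A x - A x\<^sub>\<alpha>)) \<le> rho A R \<nu> x"
      unfolding rho_def by (intro Sup_upper) blast
    from enn2real_mono[OF this finite]
    show "\<alpha> powr - \<nu> * norm (A x - A x\<^sub>\<alpha>) \<le> enn2real (rho A R \<nu> x)" by simp
  qed
next
  assume "\<exists>C. \<forall>\<alpha> x\<^sub>\<alpha>. 0 < \<alpha> \<longrightarrow> x\<^sub>\<alpha> \<in> Ralpha A R \<alpha> (A x) \<longrightarrow> \<alpha> powr - \<nu> * norm (A x - A x\<^sub>\<alpha>) \<le> C"
  then obtain C where "\<forall>\<alpha> x\<^sub>\<alpha>. 0 < \<alpha> \<longrightarrow> x\<^sub>\<alpha> \<in> Ralpha A R \<alpha> (A x) \<longrightarrow> \<alpha> powr - \<nu> * norm (A x - A x\<^sub>\<alpha>) \<le> C"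
    by blast
  then have "rho A R \<nu> x \<le> ennreal C"
    unfolding rho_def by (intro Sup_least) (auto intro: ennreal_leI)
  then show "x \<in> Kset A R \<nu>"
    unfolding Kset_def by (simp add: le_less_trans top.not_eq_extremum)
qed

lemma R_le_Tik:
  assumes "0 \<le> \<alpha>"
  shows "R x \<le> Tik A R \<alpha> x g"
  using assms by (cases "R x") (simp_all add: Tik_def)

lemma A_add_kerA:
  assumes "linear A" and "k \<in> kerA A"
  shows "A (x + k) = A x"
  using assms by (simp add: kerA_def linear_add)

locale tikhonov =
  fixes tau :: "'a::banach topology" and R :: "'a \<Rightarrow> ereal"
    and A :: "'a \<Rightarrow> 'b::{real_inner, complete_space}"
  assumes tau_lch: "locally_convex_Hausdorff tau"
    and R_proper_convex: "proper_convex R"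
    and R_sublevel_compact: "\<And>c::real. compactin tau {x. R x \<le> ereal c}"
    and A_linear: "linear A"
    and A_continuous: "continuous_map tau weak_topology A"
begin

lemma topspace_tau: "topspace tau = UNIV"
  using tau_lch by (simp add: locally_convex_Hausdorff_def)

lemma R_sublevel_closed: "closedin tau {x. R x \<le> ereal c}"
  using tau_lch R_sublevel_compact compactin_imp_closedin
  by (auto simp: locally_convex_Hausdorff_def)

lemma R_not_MInf: "R x \<noteq> -\<infinity>"
  using R_proper_convex by (simp add: proper_convex_def)

lemma edomE:
  assumes "x \<in> edom R"
  obtains r where "R x = ereal r"
  using assms R_not_MInf[of x] by (cases "R x") (auto simp: edom_def)

lemma edom_nonempty: "\<exists>x. x \<in> edom R"
  using R_proper_convex by (auto simp: proper_convex_def edom_def)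

lemma R_upper_level_open: "openin tau {x. c < R x}"
proof (cases c)
  case (real r)
  have "{x. c < R x} = topspace tau - {x. R x \<le> ereal r}"
    by (auto simp: topspace_tau real not_le)
  then show ?thesis using R_sublevel_closed by (simp add: openin_diff)
next
  case MInf
  then have "{x. c < R x} = topspace tau"
    using R_not_MInf by (auto simp: topspace_tau)
  then show ?thesis by simp
qed simp

lemma residual_upper_level_open: "openin tau {x. r < norm (g - A x)}"
  using openin_continuous_map_preimage[OF A_continuous openin_weak_topology_norm_gt[of r g]]
  by (simp add: topspace_tau)

lemma Tik_upper_level_open:
  assumes "0 < \<alpha>"
  shows "openin tau {x. c < Tik A R \<alpha> x g}"
  unfolding Tik_def
  using assms residual_upper_level_open R_upper_level_open
  by (intro openin_upper_level_add openin_upper_level_scaled_square) auto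

lemma Tik_sublevel_closed:
  assumes "0 < \<alpha>"
  shows "closedin tau {x. Tik A R \<alpha> x g \<le> c}"
proof -
  have "{x. Tik A R \<alpha> x g \<le> c} = topspace tau - {x. c < Tik A R \<alpha> x g}"
    by (auto simp: topspace_tau not_less)
  then show ?thesis using Tik_upper_level_open[OF assms] by (simp add: closedin_diff)
qed

lemma argminR_nonempty: "\<exists>m. m \<in> argminR R"
proof -
  obtain x0 r0 where "R x0 = ereal r0" using edom_nonempty edomE by metis
  moreover have "closedin tau {x. R x \<le> R y}" for y
    using R_sublevel_closed R_not_MInf[of y] closedin_topspace[of tau]
    by (cases "R y") (auto simp: topspace_tau)
  ultimately show ?thesis
    using compact_sublevel_attains_min[of tau R x0] R_sublevel_compact
    by (auto simp: argminR_def)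
qed

lemma argminR_edom:
  assumes "m \<in> argminR R"
  shows "m \<in> edom R"
  using assms edom_nonempty by (force simp: argminR_def edom_def)

lemma Ralpha_nonempty:
  assumes "0 < \<alpha>"
  shows "\<exists>x. x \<in> Ralpha A R \<alpha> g"
proof -
  let ?T = "\<lambda>x. Tik A R \<alpha> x g"
  have R_le_T: "R x \<le> ?T x" for x using assms by (intro R_le_Tik) simp
  obtain x0 r0 where r0: "R x0 = ereal r0" using edom_nonempty edomE by metis
  define c0 where "c0 = 1 / (2 * \<alpha>) * (norm (g - A x0))\<^sup>2 + r0"
  have T_x0: "?T x0 = ereal c0" by (simp add: Tik_def r0 c0_def)
  have "{x. ?T x \<le> ?T x0} \<subseteq> {x. R x \<le> ereal c0}"
    using R_le_T order.trans unfolding T_x0 by blast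
  then have "compactin tau {x. ?T x \<le> ?T x0}"
    by (rule closed_compactin[OF R_sublevel_compact _ Tik_sublevel_closed[OF assms]])
  then obtain m where m: "\<And>x. ?T m \<le> ?T x"
    using compact_sublevel_attains_min Tik_sublevel_closed[OF assms] by metis
  have "R m \<le> ereal c0"
    using order.trans[OF R_le_T m, of x0] T_x0 by simp
  then have "m \<in> edom R" by (auto simp: edom_def)
  with m show ?thesis by (auto simp: Ralpha_def)
qed

lemma Ralpha_edom: "x \<in> Ralpha A R \<alpha> g \<Longrightarrow> x \<in> edom R"
  by (simp add: Ralpha_def)

lemma Ralpha_residual_bound:
  assumes m: "m \<in> argminR R" and \<alpha>: "0 < \<alpha>" and x: "x \<in> Ralpha A R \<alpha> g" and z: "z \<in> edom R"
  shows "(norm (g - A x))\<^sup>2 \<le> (norm (g - A z))\<^sup>2 + 2 * \<alpha> * (real_of_ereal (R z) - real_of_ereal (R m))"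
proof -
  obtain rx rz rm where r: "R x = ereal rx" "R z = ereal rz" "R m = ereal rm"
    using edomE Ralpha_edom[OF x] z argminR_edom[OF m] by metis
  have "Tik A R \<alpha> x g \<le> Tik A R \<alpha> z g" using x z by (simp add: Ralpha_def)
  then have "(norm (g - A x))\<^sup>2 / (2 * \<alpha>) + rx \<le> (norm (g - A z))\<^sup>2 / (2 * \<alpha>) + rz"
    by (simp add: Tik_def r)
  then have "2 * \<alpha> * ((norm (g - A x))\<^sup>2 / (2 * \<alpha>) + rx)
      \<le> 2 * \<alpha> * ((norm (g - A z))\<^sup>2 / (2 * \<alpha>) + rz)"
    using \<alpha> by (intro mult_left_mono) auto
  then have "(norm (g - A x))\<^sup>2 \<le> (norm (g - A z))\<^sup>2 + 2 * \<alpha> * (rz - rx)"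
    using \<alpha> by (simp add: distrib_left right_diff_distrib)
  moreover have "R m \<le> R x" using m by (simp add: argminR_def)
  then have "2 * \<alpha> * (rz - rx) \<le> 2 * \<alpha> * (rz - rm)"
    using \<alpha> r by (intro mult_left_mono) auto
  ultimately show ?thesis using r by simp
qed

lemma Ralpha_residual_le_argmin:
  assumes "m \<in> argminR R" and "0 < \<alpha>" and "x \<in> Ralpha A R \<alpha> g"
  shows "norm (g - A x) \<le> norm (g - A m)"
proof -
  have "(norm (g - A x))\<^sup>2 \<le> (norm (g - A m))\<^sup>2"
    using Ralpha_residual_bound[OF assms argminR_edom[OF assms(1)]] by simp
  then show ?thesis by (rule power2_le_imp_le) simp
qed

lemma Ralpha_first_order:
  assumes \<alpha>: "0 < \<alpha>" and x: "x \<in> Ralpha A R \<alpha> g" and z: "z \<in> edom R"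
    and t: "0 < t" "t \<le> 1"
  shows "real_of_ereal (R x) \<le> real_of_ereal (R z) + ((g - A x) \<bullet> (A x - A z)) / \<alpha>
           + t * (norm (A z - A x))\<^sup>2 / (2 * \<alpha>)"
proof -
  define u where "u = g - A x"
  define v where "v = A z - A x"
  obtain rx rz where r: "R x = ereal rx" "R z = ereal rz"
    using edomE Ralpha_edom[OF x] z by metis
  define w where "w = (1 - t) *\<^sub>R x + t *\<^sub>R z"
  have Aw: "A w = (1 - t) *\<^sub>R A x + t *\<^sub>R A z"
    using A_linear by (simp add: w_def linear_add linear_scale)
  have "R w \<le> ereal (1 - t) * R x + ereal t * R z"
    using R_proper_convex t unfolding proper_convex_def w_def by auto
  then have "R w \<le> ereal ((1 - t) * rx + t * rz)" by (simp add: r)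
  then obtain rw where rw: "R w = ereal rw" "rw \<le> (1 - t) * rx + t * rz"
    using R_not_MInf[of w] by (cases "R w") auto
  then have "w \<in> edom R" by (simp add: edom_def)
  then have "Tik A R \<alpha> x g \<le> Tik A R \<alpha> w g" using x by (simp add: Ralpha_def)
  moreover have "g - A w = u - t *\<^sub>R v"
    using Aw by (simp add: u_def v_def algebra_simps)
  moreover have "(norm (u - t *\<^sub>R v))\<^sup>2 = (norm u)\<^sup>2 - 2 * t * (u \<bullet> v) + t\<^sup>2 * (norm v)\<^sup>2"
    unfolding power2_norm_eq_inner
    by (simp add: inner_diff_left inner_diff_right inner_commute algebra_simps power2_eq_square)
  ultimately have "(norm u)\<^sup>2 / (2 * \<alpha>) + rx
      \<le> ((norm u)\<^sup>2 - 2 * t * (u \<bullet> v) + t\<^sup>2 * (norm v)\<^sup>2) / (2 * \<alpha>) + (1 - t) * rx + t * rz"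
    using rw by (simp add: Tik_def r u_def)
  then have "t * rx \<le> t * (rz - (u \<bullet> v) / \<alpha> + t * (norm v)\<^sup>2 / (2 * \<alpha>))"
    using \<alpha> by (simp add: field_simps power2_eq_square)
  then have "rx \<le> rz - (u \<bullet> v) / \<alpha> + t * (norm v)\<^sup>2 / (2 * \<alpha>)"
    using t by simp
  moreover have "u \<bullet> (A x - A z) = - (u \<bullet> v)" by (simp add: v_def inner_diff_right)
  ultimately show ?thesis by (simp add: r u_def v_def)
qed

lemma Kset_zero: "Kset A R 0 = UNIV"
proof -
  obtain m where m: "m \<in> argminR R" using argminR_nonempty by blast
  have "x \<in> Kset A R 0" for x
    unfolding Kset_iff_bounded using Ralpha_residual_le_argmin[OF m] by auto
  then show ?thesis by blast
qed

lemma Kset_antimono: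
  assumes "0 \<le> \<nu>1" and "\<nu>1 \<le> \<nu>2"
  shows "Kset A R \<nu>2 \<subseteq> Kset A R \<nu>1"
proof
  fix x assume "x \<in> Kset A R \<nu>2"
  then obtain C where C: "\<And>\<alpha> x\<^sub>\<alpha>. 0 < \<alpha> \<Longrightarrow> x\<^sub>\<alpha> \<in> Ralpha A R \<alpha> (A x) \<Longrightarrow> \<alpha> powr - \<nu>2 * norm (A x - A x\<^sub>\<alpha>) \<le> C"
    unfolding Kset_iff_bounded by blast
  obtain m where m: "m \<in> argminR R" using argminR_nonempty by blast
  have "\<alpha> powr - \<nu>1 * norm (A x - A x\<^sub>\<alpha>) \<le> max C (norm (A x - A m))"
    if \<alpha>: "0 < \<alpha>" and x\<^sub>\<alpha>: "x\<^sub>\<alpha> \<in> Ralpha A R \<alpha> (A x)" for \<alpha> x\<^sub>\<alpha>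
  proof (cases "\<alpha> \<le> 1")
    case True
    then have "\<alpha> powr - \<nu>1 \<le> \<alpha> powr - \<nu>2" using \<alpha> assms by (intro powr_mono') auto
    then have "\<alpha> powr - \<nu>1 * norm (A x - A x\<^sub>\<alpha>) \<le> \<alpha> powr - \<nu>2 * norm (A x - A x\<^sub>\<alpha>)"
      by (rule mult_right_mono) simp
    also have "\<dots> \<le> C" using C[OF \<alpha> x\<^sub>\<alpha>] .
    finally show ?thesis by simp
  next
    case False
    then have "\<alpha> powr - \<nu>1 \<le> 1" using assms by (simp add: powr_minus inverse_le_1_iff ge_one_powr_ge_zero)
    then have "\<alpha> powr - \<nu>1 * norm (A x - A x\<^sub>\<alpha>) \<le> norm (A x - A x\<^sub>\<alpha>)"
      by (simp add: mult_left_le_one_le)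
    also have "\<dots> \<le> norm (A x - A m)" using Ralpha_residual_le_argmin[OF m \<alpha> x\<^sub>\<alpha>] .
    finally show ?thesis by simp
  qed
  then show "x \<in> Kset A R \<nu>1" unfolding Kset_iff_bounded by blast
qed

lemma edom_plus_kerA_in_Kset_half:
  assumes d: "d \<in> edom R" and k: "k \<in> kerA A"
  shows "d + k \<in> Kset A R (1/2)"
proof -
  obtain m where m: "m \<in> argminR R" using argminR_nonempty by blast
  obtain rd rm where r: "R d = ereal rd" "R m = ereal rm"
    using edomE d argminR_edom[OF m] by metis
  have "rm \<le> rd" using m r by (metis argminR_def mem_Collect_eq ereal_less_eq(3))
  define C where "C = sqrt (2 * (rd - rm))"
  have "\<alpha> powr - (1/2) * norm (A d - A x\<^sub>\<alpha>) \<le> C"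
    if \<alpha>: "0 < \<alpha>" and x\<^sub>\<alpha>: "x\<^sub>\<alpha> \<in> Ralpha A R \<alpha> (A d)" for \<alpha> x\<^sub>\<alpha>
  proof -
    have "(norm (A d - A x\<^sub>\<alpha>))\<^sup>2 \<le> \<alpha> * (2 * (rd - rm))"
      using Ralpha_residual_bound[OF m \<alpha> x\<^sub>\<alpha> d] by (simp add: r algebra_simps)
    then have "norm (A d - A x\<^sub>\<alpha>) \<le> sqrt \<alpha> * C"
      unfolding C_def by (metis real_le_rsqrt real_sqrt_mult)
    then show ?thesis
      unfolding powr_minus_mult_le_iff[OF \<alpha>] using \<alpha> by (simp add: powr_half_sqrt mult.commute)
  qed
  then show ?thesis
    unfolding Kset_iff_bounded A_add_kerA[OF A_linear k] by blast
qed

lemma argminR_plus_kerA_in_Kset: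
  assumes m: "m \<in> argminR R" and k: "k \<in> kerA A"
  shows "m + k \<in> Kset A R \<nu>"
proof -
  have "A m = A x\<^sub>\<alpha>" if "0 < \<alpha>" "x\<^sub>\<alpha> \<in> Ralpha A R \<alpha> (A m)" for \<alpha> x\<^sub>\<alpha>
    using Ralpha_residual_bound[OF m that argminR_edom[OF m]] by simp
  then show ?thesis
    unfolding Kset_iff_bounded A_add_kerA[OF A_linear k] by (intro exI[of _ 0]) simp
qed

lemma Kset_Ralpha_R_bound:
  assumes C: "\<And>\<alpha> x\<^sub>\<alpha>. 0 < \<alpha> \<Longrightarrow> x\<^sub>\<alpha> \<in> Ralpha A R \<alpha> (A x) \<Longrightarrow> \<alpha> powr - \<nu> * norm (A x - A x\<^sub>\<alpha>) \<le> C"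
    and \<nu>: "0 \<le> \<nu>" and \<alpha>: "0 < \<alpha>" "\<alpha> \<le> 1"
    and x\<^sub>\<alpha>: "x\<^sub>\<alpha> \<in> Ralpha A R \<alpha> (A x)" and z: "z \<in> edom R"
  shows "R x\<^sub>\<alpha> \<le> R z + ereal (\<alpha> powr (\<nu> - 1) * (C * (norm (A z - A x) + C) + (norm (A z - A x) + C)\<^sup>2 / 2))"
proof -
  \<comment> \<open>with \<open>t = \<alpha>\<^sup>\<nu>\<close> both error terms of the first-order inequality are of order \<open>\<alpha>\<^sup>\<nu>\<^sup>-\<^sup>1\<close>\<close>
  define t where "t = \<alpha> powr \<nu>"
  define V where "V = norm (A z - A x) + C"
  have t: "0 < t" "t \<le> 1" using \<alpha> \<nu> by (auto simp: t_def powr_le1)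
  have u: "norm (A x - A x\<^sub>\<alpha>) \<le> C * t"
    using C[OF \<alpha>(1) x\<^sub>\<alpha>] unfolding powr_minus_mult_le_iff[OF \<alpha>(1)] t_def .
  then have Ct_nonneg: "0 \<le> C * t" using norm_ge_zero order.trans by blast
  then have C_nonneg: "0 \<le> C" using t by (simp add: zero_le_mult_iff)
  have "norm (A z - A x\<^sub>\<alpha>) \<le> norm (A z - A x) + norm (A x - A x\<^sub>\<alpha>)"
    using norm_triangle_ineq[of "A z - A x" "A x - A x\<^sub>\<alpha>"] by simp
  also have "\<dots> \<le> V" using u t C_nonneg mult_left_le[of t C] by (simp add: V_def)
  finally have v: "norm (A z - A x\<^sub>\<alpha>) \<le> V" .
  have "(A x - A x\<^sub>\<alpha>) \<bullet> (A x\<^sub>\<alpha> - A z) \<le> norm (A x - A x\<^sub>\<alpha>) * norm (A x\<^sub>\<alpha> - A z)"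
    by (rule norm_cauchy_schwarz)
  also have "\<dots> \<le> (C * t) * V"
    using u v Ct_nonneg by (intro mult_mono) (auto simp: norm_minus_commute)
  finally have cross: "(A x - A x\<^sub>\<alpha>) \<bullet> (A x\<^sub>\<alpha> - A z) \<le> C * t * V" .
  have square: "t * (norm (A z - A x\<^sub>\<alpha>))\<^sup>2 \<le> t * V\<^sup>2"
    using v t by (intro mult_left_mono power_mono) auto
  have "real_of_ereal (R x\<^sub>\<alpha>) \<le> real_of_ereal (R z) + ((A x - A x\<^sub>\<alpha>) \<bullet> (A x\<^sub>\<alpha> - A z)) / \<alpha>
           + t * (norm (A z - A x\<^sub>\<alpha>))\<^sup>2 / (2 * \<alpha>)"
    by (rule Ralpha_first_order[OF \<alpha>(1) x\<^sub>\<alpha> z t])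
  also have "\<dots> \<le> real_of_ereal (R z) + C * t * V / \<alpha> + t * V\<^sup>2 / (2 * \<alpha>)"
    using cross square \<alpha> by (intro add_mono divide_right_mono) auto
  also have "\<dots> = real_of_ereal (R z) + t / \<alpha> * (C * V + V\<^sup>2 / 2)"
    using \<alpha> by (simp add: field_simps)
  also have "t / \<alpha> = \<alpha> powr (\<nu> - 1)"
    using \<alpha> by (simp add: t_def powr_diff)
  finally have "real_of_ereal (R x\<^sub>\<alpha>) \<le> real_of_ereal (R z) + \<alpha> powr (\<nu> - 1) * (C * V + V\<^sup>2 / 2)" .
  moreover obtain r where "R x\<^sub>\<alpha> = ereal r" by (rule edomE[OF Ralpha_edom[OF x\<^sub>\<alpha>]])
  moreover obtain r' where "R z = ereal r'" by (rule edomE[OF z])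
  ultimately show ?thesis by (simp add: V_def)
qed

lemma cluster_point_A_eq:
  assumes cluster: "\<forall>U. openin tau U \<and> m \<in> U \<longrightarrow> (\<exists>\<^sub>F n in sequentially. y n \<in> U)"
    and residual: "(\<lambda>n. norm (A x - A (y n))) \<longlonglongrightarrow> 0"
  shows "A m = A x"
proof -
  have "norm (A x - A m) \<le> 0 + \<epsilon>" if "0 < \<epsilon>" for \<epsilon>
  proof -
    have "\<forall>\<^sub>F n in sequentially. norm (A x - A (y n)) \<le> \<epsilon>"
      using order_tendstoD(2)[OF residual that] by (rule eventually_mono) simp
    then show ?thesis
      using cluster_point_upper_level_le[where f = "\<lambda>w. norm (A x - A w)",
          OF residual_upper_level_open cluster] by simp
  qed
  then have "norm (A x - A m) \<le> 0" by (rule field_le_epsilon)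
  then show ?thesis by simp
qed

lemma cluster_point_in_argminR:
  assumes cluster: "\<forall>U. openin tau U \<and> m \<in> U \<longrightarrow> (\<exists>\<^sub>F n in sequentially. y n \<in> U)"
    and minimizing: "\<And>z \<epsilon>. z \<in> edom R \<Longrightarrow> 0 < \<epsilon> \<Longrightarrow> \<forall>\<^sub>F n in sequentially. R (y n) \<le> R z + ereal \<epsilon>"
  shows "m \<in> argminR R"
proof -
  have "R m \<le> R z" for z
  proof (cases "z \<in> edom R")
    case True
    show ?thesis
    proof (rule ereal_le_epsilon2)
      fix \<epsilon> :: real assume "0 < \<epsilon>"
      show "R m \<le> R z + ereal \<epsilon>"
        using cluster_point_upper_level_le[where f = R,
            OF R_upper_level_open cluster minimizing[OF True \<open>0 < \<epsilon>\<close>]] .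
    qed
  qed (simp add: edom_def)
  then show ?thesis by (simp add: argminR_def)
qed

lemma Kset_minimizing_sequence:
  assumes \<nu>: "1 < \<nu>" and x: "x \<in> Kset A R \<nu>"
  obtains y c where "\<And>n. R (y n) \<le> ereal c"
    and "(\<lambda>n. norm (A x - A (y n))) \<longlonglongrightarrow> 0"
    and "\<And>z \<epsilon>. z \<in> edom R \<Longrightarrow> 0 < \<epsilon> \<Longrightarrow> \<forall>\<^sub>F n in sequentially. R (y n) \<le> R z + ereal \<epsilon>"
proof -
  obtain C where C_nonneg: "0 \<le> C"
    and C: "\<And>\<alpha> x\<^sub>\<alpha>. 0 < \<alpha> \<Longrightarrow> x\<^sub>\<alpha> \<in> Ralpha A R \<alpha> (A x) \<Longrightarrow> \<alpha> powr - \<nu> * norm (A x - A x\<^sub>\<alpha>) \<le> C"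
    using x unfolding Kset_iff_bounded by (meson max.cobounded2 max.coboundedI1)
  define a :: "nat \<Rightarrow> real" where "a n = inverse (real (Suc n))" for n
  have a: "0 < a n" "a n \<le> 1" for n by (auto simp: a_def inverse_le_1_iff)
  have a_powr_lim: "(\<lambda>n. a n powr p) \<longlonglongrightarrow> 0" if "0 < p" for p
    unfolding a_def using LIMSEQ_inverse_Suc_powr[OF that] .
  obtain y where y: "\<And>n. y n \<in> Ralpha A R (a n) (A x)"
    using Ralpha_nonempty[OF a(1)] choice[of "\<lambda>n x'. x' \<in> Ralpha A R (a n) (A x)"] by blast
  define B where "B z = C * (norm (A z - A x) + C) + (norm (A z - A x) + C)\<^sup>2 / 2" for z
  have R_y: "R (y n) \<le> R z + ereal (a n powr (\<nu> - 1) * B z)" if "z \<in> edom R" for z n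
    unfolding B_def using Kset_Ralpha_R_bound[OF C _ a y that] \<nu> by simp
  obtain m where m: "m \<in> argminR R" using argminR_nonempty by blast
  obtain rm where rm: "R m = ereal rm" by (rule edomE[OF argminR_edom[OF m]])
  show ?thesis
  proof
    fix n
    have "R (y n) \<le> ereal (rm + a n powr (\<nu> - 1) * B m)"
      using R_y[OF argminR_edom[OF m], of n] by (simp add: rm)
    also have "a n powr (\<nu> - 1) * B m \<le> B m"
      using a[of n] \<nu> C_nonneg by (intro mult_left_le_one_le powr_le1) (auto simp: B_def)
    finally show "R (y n) \<le> ereal (rm + B m)" by simp
  next
    have "norm (A x - A (y n)) \<le> C * a n powr \<nu>" for n
      using C[OF a(1) y] unfolding powr_minus_mult_le_iff[OF a(1)] .
    then have "\<forall>\<^sub>F n in sequentially. norm (norm (A x - A (y n))) \<le> C * a n powr \<nu>"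
      by (intro always_eventually allI) simp
    moreover have "(\<lambda>n. C * a n powr \<nu>) \<longlonglongrightarrow> 0"
      using a_powr_lim[of \<nu>] \<nu> by (intro tendsto_mult_right_zero) simp
    ultimately show "(\<lambda>n. norm (A x - A (y n))) \<longlonglongrightarrow> 0"
      by (rule Lim_null_comparison)
  next
    fix z \<epsilon> assume z: "z \<in> edom R" and "0 < (\<epsilon>::real)"
    have "(\<lambda>n. a n powr (\<nu> - 1) * B z) \<longlonglongrightarrow> 0"
      using a_powr_lim[of "\<nu> - 1"] \<nu> by (intro tendsto_mult_left_zero) simp
    then have "\<forall>\<^sub>F n in sequentially. a n powr (\<nu> - 1) * B z < \<epsilon>"
      using \<open>0 < \<epsilon>\<close> by (rule order_tendstoD)
    then show "\<forall>\<^sub>F n in sequentially. R (y n) \<le> R z + ereal \<epsilon>"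
    proof (rule eventually_mono)
      fix n assume "a n powr (\<nu> - 1) * B z < \<epsilon>"
      then have "R z + ereal (a n powr (\<nu> - 1) * B z) \<le> R z + ereal \<epsilon>"
        by (intro add_left_mono) simp
      then show "R (y n) \<le> R z + ereal \<epsilon>" using R_y[OF z, of n] by simp
    qed
  qed
qed

lemma Kset_subset_argminR_plus_kerA:
  assumes "1 < \<nu>"
  shows "Kset A R \<nu> \<subseteq> {m + k | m k. m \<in> argminR R \<and> k \<in> kerA A}"
proof
  fix x assume "x \<in> Kset A R \<nu>"
  then obtain y c where bounded: "\<And>n. R (y n) \<le> ereal c"
    and residual: "(\<lambda>n. norm (A x - A (y n))) \<longlonglongrightarrow> 0"
    and minimizing: "\<And>z \<epsilon>. z \<in> edom R \<Longrightarrow> 0 < \<epsilon> \<Longrightarrow> \<forall>\<^sub>F n in sequentially. R (y n) \<le> R z + ereal \<epsilon>"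
    using Kset_minimizing_sequence[OF assms] by metis
  obtain m where cluster: "\<forall>U. openin tau U \<and> m \<in> U \<longrightarrow> (\<exists>\<^sub>F n in sequentially. y n \<in> U)"
    using compactin_sequence_cluster_point[OF R_sublevel_compact[of c]] bounded by blast
  have "m \<in> argminR R" using cluster_point_in_argminR[OF cluster minimizing] .
  moreover have "x - m \<in> kerA A"
    using cluster_point_A_eq[OF cluster residual] A_linear by (simp add: kerA_def linear_diff)
  ultimately show "x \<in> {m + k | m k. m \<in> argminR R \<and> k \<in> kerA A}"
    by (intro CollectI exI[of _ m] exI[of _ "x - m"]) simp
qed

end

theorem lemma3p6:
  fixes tau :: "'a::banach topology"
    and R :: "'a \<Rightarrow> ereal"
    and A :: "'a \<Rightarrow> 'b::{real_inner, complete_space}"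
  assumes "locally_convex_Hausdorff tau"
    and "proper_convex R"
    and "\<And>c::real. compactin tau {x. R x \<le> ereal c}"
    and "linear A"
    and "continuous_map tau weak_topology A"
  shows "Kset A R 0 = UNIV
    \<and> (\<forall>\<nu>1 \<nu>2. 0 \<le> \<nu>1 \<and> \<nu>1 \<le> \<nu>2 \<longrightarrow> Kset A R \<nu>2 \<subseteq> Kset A R \<nu>1)
    \<and> (\<forall>\<nu>>1. Kset A R \<nu> = {m + k | m k. m \<in> argminR R \<and> k \<in> kerA A})
    \<and> {d + k | d k. d \<in> edom R \<and> k \<in> kerA A} \<subseteq> Kset A R (1/2)"
proof -
  interpret tikhonov tau R A by (rule tikhonov.intro) (fact assms)+
  have "Kset A R \<nu> = {m + k | m k. m \<in> argminR R \<and> k \<in> kerA A}" if "1 < \<nu>" for \<nu>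
    using Kset_subset_argminR_plus_kerA[OF that] argminR_plus_kerA_in_Kset by blast
  moreover have "{d + k | d k. d \<in> edom R \<and> k \<in> kerA A} \<subseteq> Kset A R (1/2)"
    using edom_plus_kerA_in_Kset_half by blast
  ultimately show ?thesis using Kset_zero Kset_antimono by blast
qed

end
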